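(* Let $p\ge 2$ and let $J$ be a periodic Jacobi operator on $\ell^2(\mathbb{Z})$ with period $p$, given by $(J\psi)_n=a_{n-1}\psi_{n-1}+b_n\psi_n+a_n\psi_{n+1}$, where $a_n>0$, $b_n\in\mathbb{R}$, $a_{n+p}=a_n$, $b_{n+p}=b_n$ for all $n\in\mathbb{Z}$. Let $A:=(a_1a_2\cdots a_p)^{1/p}$, let $\sigma_1,\dots,\sigma_p$ be the spectral bands of $J$, and let $s:=\lambda_p^{\max}-\lambda_1^{\min}$. If $d$ is a real number with $s\le d$, then $$\frac{1}{\log(d/A)}\le\sum_{n=1}^{p}\frac{1}{\log\big(4d/|\sigma_n|\big)}.$$
   Context: Spectral structure: the spectrum of $J$ is $\sigma(J)=\{\lambda\in\mathbb{R}: |\Delta(\lambda)|\le 2\}$, where $\Delta(\lambda)=\operatorname{tr}\big(A_p(\lambda)A_{p-1}(\lambda)\cdots A_1(\lambda)\big)$ with $A_n(\lambda)=\begin{pmatrix}(\lambda-b_n)/a_n & -a_{n-1}/a_n\\ 1&0\end{pmatrix}$ (the discriminant, a real polynomial of degree $p$). It is a standard fact that this set is a union of $p$ closed intervals (bands) $\sigma_n=[\lambda_n^{\min},\lambda_n^{\max}]$, $1\le n\le p$, with $\lambda_n^{\min}<\lambda_n^{\max}\le\lambda_{n+1}^{\min}$ (bands may touch but do not overlap); on each band $\Delta$ is monotone and maps it onto $[-2,2]$. The spectral gaps are $\gamma_n=(\lambda_n^{\max},\lambda_{n+1}^{\min})$, $1\le n\le p-1$ (possibly empty). $|\cdot|$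 denotes Lebesgue measure (length). *)

theory Defs
  imports "HOL-Analysis.Analysis"
begin

definition transfer_mat :: "(int \<Rightarrow> real) \<Rightarrow> (int \<Rightarrow> real) \<Rightarrow> int \<Rightarrow> real \<Rightarrow> real^2^2" where
  "transfer_mat a b n x =
     vector [vector [(x - b n) / a n, - a (n - 1) / a n], vector [1, 0]]"

fun monodromy :: "(int \<Rightarrow> real) \<Rightarrow> (int \<Rightarrow> real) \<Rightarrow> nat \<Rightarrow> real \<Rightarrow> real^2^2" where
  "monodromy a b 0 x = mat 1"
| "monodromy a b (Suc k) x = transfer_mat a b (int (Suc k)) x ** monodromy a b k x"

definition discriminant :: "(int \<Rightarrow> real) \<Rightarrow> (int \<Rightarrow> real) \<Rightarrow> nat \<Rightarrow> real \<Rightarrow> real" where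
  "discriminant a b p x = trace (monodromy a b p x)"

definition jacobi_spectrum :: "(int \<Rightarrow> real) \<Rightarrow> (int \<Rightarrow> real) \<Rightarrow> nat \<Rightarrow> real set" where
  "jacobi_spectrum a b p = {x. \<bar>discriminant a b p x\<bar> \<le> 2}"

definition is_band_decomposition ::
  "(int \<Rightarrow> real) \<Rightarrow> (int \<Rightarrow> real) \<Rightarrow> nat \<Rightarrow> (nat \<Rightarrow> real) \<Rightarrow> (nat \<Rightarrow> real) \<Rightarrow> bool" where
  "is_band_decomposition a b p lmin lmax \<longleftrightarrow>
     jacobi_spectrum a b p = (\<Union>n\<in>{1..p}. {lmin n..lmax n}) \<and>
     (\<forall>n\<in>{1..p}. lmin n < lmax n) \<and>
     (\<forall>n\<in>{1..<p}. lmax n \<le> lmin (Suc n)) \<and>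
     (\<forall>n\<in>{1..p}. (mono_on {lmin n..lmax n} (discriminant a b p) \<or>
                    antimono_on {lmin n..lmax n} (discriminant a b p)) \<and>
                   discriminant a b p ` {lmin n..lmax n} = {-2..2})"

end

theory Submission
  imports Defs "HOL-Computational_Algebra.Polynomial"
begin

text \<open>The discriminant \<Delta> is a real polynomial of degree p with leading coefficient
  1/(a_1 \<cdots> a_p) = A^-p. On each band \<sigma>_n it runs monotonically between -2 and 2, so it
  has a zero z_n inside \<sigma>_n, and these p zeros are all of its zeros. Hence on the convex hull
  of the spectrum, of length s, we get |\<Delta>(x)| = A^-p \<Prod>_k |x - z_k| \<le> A^-p s^(p-1) |x - z_n|.
  Adding this at the two edges of \<sigma>_n, where \<Delta> takes the values 2 and -2, gives
  4 A^p \<le> s^(p-1) |\<sigma>_n|, i.e. log (4d/|\<sigma>_n|) \<le> p log (d/A) for every n; summing the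
  reciprocals over the p bands gives the inequality.\<close>

text \<open>The solution of a_k u_(k+1) = (x - b_k) u_k - a_(k-1) u_(k-1) with initial values u_0, u_1,
  as a polynomial in x; the entries of the monodromy matrix are such solutions.\<close>

fun jacobi_solution :: "(int \<Rightarrow> real) \<Rightarrow> (int \<Rightarrow> real) \<Rightarrow> real poly \<Rightarrow> real poly \<Rightarrow> nat \<Rightarrow> real poly" where
  "jacobi_solution a b u0 u1 0 = u0"
| "jacobi_solution a b u0 u1 (Suc 0) = u1"
| "jacobi_solution a b u0 u1 (Suc (Suc k)) =
     [:- b (int (Suc k)) / a (int (Suc k)), 1 / a (int (Suc k)):] * jacobi_solution a b u0 u1 (Suc k)
     - smult (a (int k) / a (int (Suc k))) (jacobi_solution a b u0 u1 k)"

lemma monodromy_eq_jacobi_solution: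
  "monodromy a b k x $ 1 $ 1 = poly (jacobi_solution a b 0 1 (Suc k)) x \<and>
   monodromy a b k x $ 1 $ 2 = poly (jacobi_solution a b 1 0 (Suc k)) x \<and>
   monodromy a b k x $ 2 $ 1 = poly (jacobi_solution a b 0 1 k) x \<and>
   monodromy a b k x $ 2 $ 2 = poly (jacobi_solution a b 1 0 k) x"
proof (induction k)
  case 0
  then show ?case by (simp add: mat_def)
next
  case (Suc k)
  then show ?case
    by (simp add: matrix_matrix_mult_def sum_2 transfer_mat_def algebra_simps diff_divide_distrib)
qed

lemma degree_jacobi_solution_10: "degree (jacobi_solution a b 1 0 k) \<le> k - 1"
proof (induction a b "1 :: real poly" "0 :: real poly" k rule: jacobi_solution.induct)
  case (3 a b k)
  let ?l = "[:- b (int (Suc k)) / a (int (Suc k)), 1 / a (int (Suc k)):]"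
  have "degree ?l \<le> 1"
    by (simp add: degree_pCons_le)
  then have mult: "degree (?l * jacobi_solution a b 1 0 (Suc k)) \<le> Suc k"
    using 3(1) by (intro order.trans[OF degree_mult_le]) simp
  have smult: "degree (smult (a (int k) / a (int (Suc k))) (jacobi_solution a b 1 0 k)) \<le> Suc k"
    using 3(2) by (intro order.trans[OF degree_smult_le]) simp
  show ?case
    unfolding jacobi_solution.simps diff_Suc_1 by (rule degree_diff_le[OF mult smult])
qed simp_all

lemma degree_lead_coeff_diff_left:
  fixes p q :: "'a::ab_group_add poly"
  assumes "degree q < degree p"
  shows "degree (p - q) = degree p \<and> lead_coeff (p - q) = lead_coeff p"
  using assms degree_add_eq_left[of "- q" p] lead_coeff_add_le[of "- q" p]
  by (simp add: add.commute)

lemma degree_lead_coeff_jacobi_solution_01: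
  assumes "\<And>n. a n > 0" and "k \<ge> 1"
  shows "degree (jacobi_solution a b 0 1 k) = k - 1 \<and>
         lead_coeff (jacobi_solution a b 0 1 k) = (\<Prod>j=1..k-1. 1 / a (int j))"
  using assms
proof (induction a b "0 :: real poly" "1 :: real poly" k rule: jacobi_solution.induct)
  case (3 a b k)
  let ?l = "[:- b (int (Suc k)) / a (int (Suc k)), 1 / a (int (Suc k)):]"
  let ?u = "jacobi_solution a b 0 1"
  have a: "a (int j) > 0" for j
    using 3(3) by simp
  have l: "?l \<noteq> 0" "degree ?l = 1" "lead_coeff ?l = 1 / a (int (Suc k))"
    using a[of "Suc k"] by auto
  have u: "degree (?u (Suc k)) = k" "lead_coeff (?u (Suc k)) = (\<Prod>j=1..k. 1 / a (int j))"
    using 3(1,3) by auto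
  then have "?u (Suc k) \<noteq> 0"
    using a by auto
  then have "degree (?l * ?u (Suc k)) = Suc k"
    using l u by (subst degree_mult_eq) simp_all
  moreover have "degree (smult (a (int k) / a (int (Suc k))) (?u k)) < Suc k"
    using 3(2,3) by (cases k) (auto intro: order.strict_trans1[OF degree_smult_le])
  moreover have "lead_coeff (?l * ?u (Suc k)) = (\<Prod>j=1..Suc k. 1 / a (int j))"
    unfolding lead_coeff_mult l(3) u(2) by simp
  ultimately show ?case
    using degree_lead_coeff_diff_left by (metis jacobi_solution.simps(3) diff_Suc_1)
qed simp_all

definition discriminant_poly :: "(int \<Rightarrow> real) \<Rightarrow> (int \<Rightarrow> real) \<Rightarrow> nat \<Rightarrow> real poly" where
  "discriminant_poly a b p = jacobi_solution a b 0 1 (Suc p) + jacobi_solution a b 1 0 p"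

lemma poly_discriminant_poly: "poly (discriminant_poly a b p) x = discriminant a b p x"
  using monodromy_eq_jacobi_solution[of a b p x]
  by (simp add: discriminant_def discriminant_poly_def trace_def sum_2)

lemma degree_lead_coeff_discriminant_poly:
  assumes "\<And>n. a n > 0" and "p \<ge> 1"
  shows "degree (discriminant_poly a b p) = p \<and>
         lead_coeff (discriminant_poly a b p) = 1 / (\<Prod>k=1..p. a (int k))"
proof -
  have u: "degree (jacobi_solution a b 0 1 (Suc p)) = p"
    "lead_coeff (jacobi_solution a b 0 1 (Suc p)) = 1 / (\<Prod>k=1..p. a (int k))"
    using degree_lead_coeff_jacobi_solution_01[of a "Suc p" b] assms
    by (auto simp: prod_dividef)
  moreover have "degree (jacobi_solution a b 1 0 p) < p"
    using degree_jacobi_solution_10[of a b p] assms(2) by linarith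
  ultimately show ?thesis
    unfolding discriminant_poly_def
    by (metis add.commute degree_add_eq_right lead_coeff_add_le)
qed

lemma prod_linear_factors_dvd:
  fixes D :: "'a::idom poly"
  assumes "finite S" "inj_on z S" "\<And>k. k \<in> S \<Longrightarrow> poly D (z k) = 0"
  shows "(\<Prod>k\<in>S. [:-z k, 1:]) dvd D"
  using assms
proof (induction S arbitrary: D rule: finite_induct)
  case (insert i S)
  have "[:-z i, 1:] dvd D"
    using insert.prems(2) by (simp add: poly_eq_0_iff_dvd)
  then obtain Q where Q: "D = [:-z i, 1:] * Q"
    by (elim dvdE)
  have "poly Q (z k) = 0" if "k \<in> S" for k
  proof -
    have "z k \<noteq> z i"
      using that insert.hyps(2) insert.prems(1) by (auto simp: inj_on_def)
    moreover have "(z k - z i) * poly Q (z k) = 0"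
      using insert.prems(2)[of k] that Q by auto
    ultimately show ?thesis
      by simp
  qed
  then have "(\<Prod>k\<in>S. [:-z k, 1:]) dvd Q"
    using insert.IH insert.prems(1) by auto
  then show ?case
    unfolding Q prod.insert[OF insert.hyps] by (rule mult_dvd_mono[OF dvd_refl])
qed simp

lemma poly_eq_lead_coeff_prod_roots:
  fixes D :: "'a::idom poly"
  assumes "finite S" "inj_on z S" "\<And>k. k \<in> S \<Longrightarrow> poly D (z k) = 0"
    and "degree D = card S"
  shows "poly D x = lead_coeff D * (\<Prod>k\<in>S. x - z k)"
proof (cases "D = 0")
  case False
  define P where "P = (\<Prod>k\<in>S. [:-z k, 1:])"
  have "P dvd D"
    unfolding P_def using assms(1-3) by (rule prod_linear_factors_dvd)
  then obtain Q where Q: "D = P * Q" ..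
  have "lead_coeff P = 1"
    unfolding P_def by (simp add: lead_coeff_prod)
  have "P \<noteq> 0" "Q \<noteq> 0" "degree P = card S"
    using False Q assms(1) unfolding P_def by (auto simp: degree_prod_sum_eq)
  then have "degree Q = 0"
    using Q assms(4) by (simp add: degree_mult_eq)
  then obtain c where "Q = [:c:]"
    by (metis degree_eq_zeroE)
  then show ?thesis
    using Q \<open>lead_coeff P = 1\<close> unfolding P_def by (simp add: lead_coeff_mult poly_prod)
qed simp

lemma abs_poly_le_dist_root:
  fixes D :: "real poly"
  assumes "finite S" "inj_on z S" "\<And>k. k \<in> S \<Longrightarrow> poly D (z k) = 0"
    and "degree D = card S"
    and "\<And>k. k \<in> S \<Longrightarrow> z k \<in> {L..U}" "x \<in> {L..U}" "n \<in> S"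
  shows "\<bar>poly D x\<bar> \<le> \<bar>lead_coeff D\<bar> * (U - L) ^ (card S - 1) * \<bar>x - z n\<bar>"
proof -
  have "\<bar>\<Prod>k\<in>S. x - z k\<bar> = \<bar>x - z n\<bar> * (\<Prod>k\<in>S - {n}. \<bar>x - z k\<bar>)"
    using assms(1,7) by (simp add: prod.remove abs_mult flip: abs_prod)
  also have "\<dots> \<le> \<bar>x - z n\<bar> * (\<Prod>k\<in>S - {n}. U - L)"
    using assms(5,6) by (intro mult_left_mono prod_mono) (auto simp: abs_le_iff, force+)
  also have "\<dots> = (U - L) ^ (card S - 1) * \<bar>x - z n\<bar>"
    using assms(1,7) by (simp add: card_Diff_singleton)
  finally have "\<bar>lead_coeff D\<bar> * \<bar>\<Prod>k\<in>S. x - z k\<bar>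
      \<le> \<bar>lead_coeff D\<bar> * ((U - L) ^ (card S - 1) * \<bar>x - z n\<bar>)"
    by (rule mult_left_mono) simp
  then show ?thesis
    using poly_eq_lead_coeff_prod_roots[OF assms(1-4)] by (simp add: abs_mult mult.assoc)
qed

lemma monotone_onto_symmetric_interval:
  fixes f :: "real \<Rightarrow> real"
  assumes "l < u" and "mono_on {l..u} f \<or> antimono_on {l..u} f"
    and onto: "f ` {l..u} = {-c..c}" and "c > 0"
  shows "\<bar>f u - f l\<bar> = 2 * c" and "\<exists>z\<in>{l<..<u}. f z = 0"
proof -
  have ends: "l \<in> {l..u}" "u \<in> {l..u}"
    using assms(1) by auto
  then have bounded: "f l \<in> {-c..c}" "f u \<in> {-c..c}"
    using onto by blast+
  have "-c \<in> f ` {l..u}" "c \<in> f ` {l..u}" "0 \<in> f ` {l..u}"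
    unfolding onto using assms(4) by auto
  then obtain y1 y2 z where y: "y1 \<in> {l..u}" "f y1 = -c" "y2 \<in> {l..u}" "f y2 = c"
    and z: "z \<in> {l..u}" "f z = 0"
    by (metis imageE)
  have endpoints: "(f l = -c \<and> f u = c) \<or> (f l = c \<and> f u = -c)"
    using assms(2)
  proof
    assume mono: "mono_on {l..u} f"
    have "f l \<le> f y1" "f y2 \<le> f u"
      using monotone_onD[OF mono ends(1) y(1)] monotone_onD[OF mono y(3) ends(2)] y by auto
    then show ?thesis
      using y bounded by auto
  next
    assume anti: "antimono_on {l..u} f"
    have "f y2 \<le> f l" "f u \<le> f y1"
      using monotone_onD[OF anti ends(1) y(3)] monotone_onD[OF anti y(1) ends(2)] y by auto
    then show ?thesis
      using y bounded by auto
  qed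
  then show "\<bar>f u - f l\<bar> = 2 * c"
    using assms(4) by auto
  have "z \<noteq> l" "z \<noteq> u"
    using z endpoints assms(4) by auto
  then show "\<exists>z\<in>{l<..<u}. f z = 0"
    using z by auto
qed

lemma sorted_intervals_le:
  fixes l u :: "nat \<Rightarrow> real"
  assumes "\<And>k. k \<in> {1..p} \<Longrightarrow> l k < u k" and "\<And>k. k \<in> {1..<p} \<Longrightarrow> u k \<le> l (Suc k)"
    and "1 \<le> n" "n < m" "m \<le> p"
  shows "u n \<le> l m"
proof -
  have "Suc n \<le> m" "m \<le> p"
    using assms(4,5) by auto
  then show ?thesis
  proof (induction m rule: dec_induct)
    case base
    then show ?case
      using assms(2,3) by simp
  next
    case (step m)
    have "u n \<le> l m"
      using step.IH step.prems by simp
    also have "l m < u m"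
      using assms(1) assms(3) step.hyps step.prems by simp
    also have "u m \<le> l (Suc m)"
      using assms(2,3) step.hyps step.prems by simp
    finally show ?case
      by simp
  qed
qed

lemma sorted_intervals_within_hull:
  fixes l u :: "nat \<Rightarrow> real"
  assumes "\<And>k. k \<in> {1..p} \<Longrightarrow> l k < u k" and "\<And>k. k \<in> {1..<p} \<Longrightarrow> u k \<le> l (Suc k)"
    and "n \<in> {1..p}"
  shows "l 1 \<le> l n" and "u n \<le> u p"
proof -
  note le = sorted_intervals_le[where l = l and u = u and p = p, OF assms(1,2)]
  have "l 1 < u 1" "l p < u p"
    using assms(1,3) by auto
  then show "l 1 \<le> l n" and "u n \<le> u p"
    using le[of 1 n] le[of n p] assms(3) by (fastforce simp: le_less)+
qed

lemma band_length_lower_bound: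
  assumes pos: "\<And>n. a n > 0" and "p \<ge> 1"
    and bands: "is_band_decomposition a b p lmin lmax" and n: "n \<in> {1..p}"
  shows "4 * (\<Prod>k=1..p. a (int k)) \<le> (lmax p - lmin 1) ^ (p - 1) * (lmax n - lmin n)"
proof -
  define D where "D = discriminant_poly a b p"
  define A where "A = (\<Prod>k=1..p. a (int k))"
  have "A > 0"
    unfolding A_def using pos by (simp add: prod_pos)
  have D: "degree D = p" "lead_coeff D = 1 / A"
    unfolding D_def A_def using degree_lead_coeff_discriminant_poly[of a p b] pos assms(2) by auto
  have edges: "\<And>k. k \<in> {1..p} \<Longrightarrow> lmin k < lmax k"
    and gaps: "\<And>k. k \<in> {1..<p} \<Longrightarrow> lmax k \<le> lmin (Suc k)"
    and onto: "\<And>k. k \<in> {1..p} \<Longrightarrow>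
       (mono_on {lmin k..lmax k} (poly D) \<or> antimono_on {lmin k..lmax k} (poly D)) \<and>
       poly D ` {lmin k..lmax k} = {-2..2}"
    using bands unfolding is_band_decomposition_def D_def poly_discriminant_poly by auto
  note hull = sorted_intervals_within_hull[of p lmin lmax, OF edges gaps]
  have "\<forall>k\<in>{1..p}. \<exists>z\<in>{lmin k<..<lmax k}. poly D z = 0"
    using monotone_onto_symmetric_interval(2)[OF edges onto[THEN conjunct1] onto[THEN conjunct2]] by simp
  then obtain z where z: "\<And>k. k \<in> {1..p} \<Longrightarrow> z k \<in> {lmin k<..<lmax k} \<and> poly D (z k) = 0"
    by metis
  have "inj_on z {1..p}"
  proof (rule linorder_inj_onI)
    fix k m assume "k < m" "k \<in> {1..p}" "m \<in> {1..p}"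
    then show "z k \<noteq> z m"
      using z[of k] z[of m] sorted_intervals_le[of p lmin lmax k m, OF edges gaps] by fastforce
  qed auto
  then have root_bound: "\<bar>poly D x\<bar> \<le> (1 / A) * (lmax p - lmin 1) ^ (p - 1) * \<bar>x - z n\<bar>"
    if "x \<in> {lmin n..lmax n}" for x
    using abs_poly_le_dist_root[of "{1..p}" z D "lmin 1" "lmax p" x n] z hull that n D \<open>A > 0\<close>
    by force
  have "4 \<le> \<bar>poly D (lmax n)\<bar> + \<bar>poly D (lmin n)\<bar>"
    using monotone_onto_symmetric_interval(1)[OF edges onto[THEN conjunct1] onto[THEN conjunct2], of n] n
    by simp
  also have "\<dots> \<le> (1 / A) * (lmax p - lmin 1) ^ (p - 1) * (\<bar>lmax n - z n\<bar> + \<bar>lmin n - z n\<bar>)"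
    using root_bound[of "lmax n"] root_bound[of "lmin n"] edges[OF n] by (simp add: distrib_left)
  also have "\<dots> = (lmax p - lmin 1) ^ (p - 1) * (lmax n - lmin n) / A"
    using z[OF n] by simp
  finally show ?thesis
    using \<open>A > 0\<close> unfolding A_def by (simp add: field_simps)
qed

lemma ln_ratio_le_of_length_bound:
  fixes A l d :: real
  assumes "p \<ge> 1" "A > 0" "l > 0" "l \<le> d" "4 * A \<le> d ^ (p - 1) * l"
  shows "0 < ln (4 * d / l)" and "ln (4 * d / l) \<le> real p * ln (d / A powr (1 / real p))"
proof -
  have "d > 0"
    using assms(3,4) by linarith
  have "ln 4 \<le> ln (4 * d / l)"
    using assms(3,4) by (subst ln_le_cancel_iff) (auto simp: field_simps)
  then show "0 < ln (4 * d / l)"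
    using ln_gt_zero[of "4 :: real"] by linarith
  have "ln (4 * A) \<le> ln (d ^ (p - 1) * l)"
    using assms \<open>d > 0\<close> by (subst ln_le_cancel_iff) auto
  then have "ln 4 + ln A \<le> real (p - 1) * ln d + ln l"
    using assms \<open>d > 0\<close> by (simp add: ln_mult ln_realpow)
  moreover have "ln (4 * d / l) = ln 4 + ln d - ln l"
    using assms \<open>d > 0\<close> by (simp add: ln_div ln_mult)
  moreover have "real p * ln (d / A powr (1 / real p)) = real p * ln d - ln A"
    using assms \<open>d > 0\<close> by (simp add: ln_div right_diff_distrib)
  ultimately show "ln (4 * d / l) \<le> real p * ln (d / A powr (1 / real p))"
    using assms(1) by (simp add: algebra_simps)
qed

lemma ln_band_ratio_bound:
  assumes pos: "\<And>n. a n > 0" and "p \<ge> 1"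
    and bands: "is_band_decomposition a b p lmin lmax" and width: "lmax p - lmin 1 \<le> d"
    and n: "n \<in> {1..p}"
  shows "0 < ln (4 * d / measure lebesgue {lmin n..lmax n})" (is ?pos)
    and "ln (4 * d / measure lebesgue {lmin n..lmax n})
           \<le> real p * ln (d / (\<Prod>k=1..p. a (int k)) powr (1 / real p))" (is ?le)
proof -
  have edges: "\<And>k. k \<in> {1..p} \<Longrightarrow> lmin k < lmax k"
    and gaps: "\<And>k. k \<in> {1..<p} \<Longrightarrow> lmax k \<le> lmin (Suc k)"
    using bands unfolding is_band_decomposition_def by auto
  have hull: "lmin 1 \<le> lmin n" "lmax n \<le> lmax p" and "lmin n < lmax n"
    using sorted_intervals_within_hull[of p lmin lmax, OF edges gaps n] edges[OF n] by auto
  have "4 * (\<Prod>k=1..p. a (int k)) \<le> (lmax p - lmin 1) ^ (p - 1) * (lmax n - lmin n)"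
    by (rule band_length_lower_bound[OF pos assms(2) bands n])
  also have "\<dots> \<le> d ^ (p - 1) * (lmax n - lmin n)"
    using hull \<open>lmin n < lmax n\<close> width by (intro mult_right_mono power_mono) auto
  finally have "4 * (\<Prod>k=1..p. a (int k)) \<le> d ^ (p - 1) * (lmax n - lmin n)" .
  moreover have "lmax n - lmin n \<le> d"
    using hull width by linarith
  moreover have "(\<Prod>k=1..p. a (int k)) > 0"
    using pos by (simp add: prod_pos)
  ultimately show ?pos ?le
    using ln_ratio_le_of_length_bound[of p _ "lmax n - lmin n" d] \<open>lmin n < lmax n\<close> assms(2)
    by simp_all
qed

theorem theorem1p1:
  fixes p :: nat and a b :: "int \<Rightarrow> real" and lmin lmax :: "nat \<Rightarrow> real" and d :: real
  assumes "p \<ge> 2"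
    and "\<And>n. a n > 0"
    and "\<And>n. a (n + int p) = a n"
    and "\<And>n. b (n + int p) = b n"
    and "is_band_decomposition a b p lmin lmax"
    and "lmax p - lmin 1 \<le> d"
  shows "1 / ln (d / ((\<Prod>k=1..p. a (int k)) powr (1 / real p)))
           \<le> (\<Sum>n=1..p. 1 / ln (4 * d / measure lebesgue {lmin n..lmax n}))"
proof -
  define Y where "Y = ln (d / (\<Prod>k=1..p. a (int k)) powr (1 / real p))"
  note term_bound = ln_band_ratio_bound[OF assms(2) _ assms(5,6), folded Y_def]
  have "0 < real p * Y"
    using term_bound[of 1] assms(1) by force
  then have "Y > 0"
    by (simp add: zero_less_mult_iff)
  have "1 / Y = (\<Sum>n=1..p. 1 / (real p * Y))"
    using assms(1) by simp
  also have "\<dots> \<le> (\<Sum>n=1..p. 1 / ln (4 * d / measure lebesgue {lmin n..lmax n}))"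
    using term_bound assms(1) by (intro sum_mono frac_le) auto
  finally show ?thesis
    unfolding Y_def .
qed

end
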